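(* Let $N\ge 1$ and $-\infty<a_i\le b_i<\infty$ with $r_i=(b_i-a_i)/2>0$ for all $i$; set $m_i=(a_i+b_i)/2$, $\Theta=\prod_{i=1}^N[a_i,b_i]$, $T(y)=\sum_{i=1}^N y_i$. Let $0<n<N$ and \[ V_n=\min_{0<\pi_i\le 1,\ \sum_{i=1}^N\pi_i\le n}\ \sum_{i=1}^N r_i^2\,\frac{1-\pi_i}{\pi_i}. \] Then, taking the infimum over all pairs $(p,\delta)$ where $p$ is a sampling design with $\pi_i=\mathbb P_p(i\in S)>0$ for all $i$ and $\mathbb E_p[|S|]\le n$, and $\delta$ is an unbiased estimator for $p$, \[ \inf_{p,\delta}\sup_{y\in\Theta}R(\delta,p;y)=V_n . \] Moreover, $V_n$ is attained by sampling each unit independently with inclusion probabilities $\pi_i^*=\min(1,c\,r_i)$, where $c>0$ is chosen so that $\sum_{i=1}^N\pi_i^*=n$, and using the estimator $\widehat T(y_S)=\sum_{i=1}^N m_i+\sum_{i\in S}\frac{y_i-m_i}{\pi_i^*}$.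
   Context: A sampling design is a probability distribution $p$ on the subsets $s\subseteq\{1,\dots,N\}$; $S$ denotes the random sample drawn from $p$, $\mathbb P_p$ and $\mathbb E_p$ denote probability and expectation with respect to $p$. An estimator $\delta$ is a collection of measurable functions $\delta_s:\Theta_s\to\mathbb R$, one for each subset $s$, where $\Theta_s=\prod_{i\in s}[a_i,b_i]$; for $y\in\Theta$ write $y_s=(y_i)_{i\in s}$. The estimator is unbiased if $\mathbb E_p[\delta_S(y_S)]=T(y)$ for all $y\in\Theta$. The risk is $R(\delta,p;y)=\mathbb E_p[(\delta_S(y_S)-T(y))^2]$. *)

theory Defs
  imports "HOL-Analysis.Analysis"
begin

text \<open>Units are indexed by 0..N-1 (i.e. the set {..<N}). Samples are subsets of {..<N}.
  Values y are elements of the extensional product Theta = PiE {..<N} (\<lambda>i. {a i..b i}).\<close>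

definition Theta :: "nat \<Rightarrow> (nat \<Rightarrow> real) \<Rightarrow> (nat \<Rightarrow> real) \<Rightarrow> (nat \<Rightarrow> real) set" where
  "Theta N a b = PiE {..<N} (\<lambda>i. {a i..b i})"

definition total :: "nat \<Rightarrow> (nat \<Rightarrow> real) \<Rightarrow> real" where
  "total N y = (\<Sum>i<N. y i)"

definition is_design :: "nat \<Rightarrow> (nat set \<Rightarrow> real) \<Rightarrow> bool" where
  "is_design N p \<longleftrightarrow> (\<forall>s. 0 \<le> p s) \<and> (\<forall>s. \<not> s \<subseteq> {..<N} \<longrightarrow> p s = 0)
      \<and> (\<Sum>s\<in>Pow {..<N}. p s) = 1"

definition incl_prob :: "nat \<Rightarrow> (nat set \<Rightarrow> real) \<Rightarrow> nat \<Rightarrow> real" where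
  "incl_prob N p i = (\<Sum>s\<in>{s\<in>Pow {..<N}. i \<in> s}. p s)"

definition exp_size :: "nat \<Rightarrow> (nat set \<Rightarrow> real) \<Rightarrow> real" where
  "exp_size N p = (\<Sum>s\<in>Pow {..<N}. p s * real (card s))"

text \<open>An estimator: for each subset s a measurable function delta s on
  Theta_s = prod_{i in s} [a_i,b_i] (extensional functions on s). It is applied to y_S = restrict y S.\<close>
definition is_estimator :: "nat \<Rightarrow> (nat \<Rightarrow> real) \<Rightarrow> (nat \<Rightarrow> real)
    \<Rightarrow> (nat set \<Rightarrow> (nat \<Rightarrow> real) \<Rightarrow> real) \<Rightarrow> bool" where
  "is_estimator N a b \<delta> \<longleftrightarrow>
     (\<forall>s. s \<subseteq> {..<N} \<longrightarrow>
        \<delta> s \<in> borel_measurable (PiM s (\<lambda>i. restrict_space borel {a i..b i})))"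

definition unbiased :: "nat \<Rightarrow> (nat \<Rightarrow> real) \<Rightarrow> (nat \<Rightarrow> real)
    \<Rightarrow> (nat set \<Rightarrow> real) \<Rightarrow> (nat set \<Rightarrow> (nat \<Rightarrow> real) \<Rightarrow> real) \<Rightarrow> bool" where
  "unbiased N a b p \<delta> \<longleftrightarrow>
     (\<forall>y\<in>Theta N a b. (\<Sum>s\<in>Pow {..<N}. p s * \<delta> s (restrict y s)) = total N y)"

definition risk :: "nat \<Rightarrow> (nat set \<Rightarrow> real) \<Rightarrow> (nat set \<Rightarrow> (nat \<Rightarrow> real) \<Rightarrow> real)
    \<Rightarrow> (nat \<Rightarrow> real) \<Rightarrow> real" where
  "risk N p \<delta> y = (\<Sum>s\<in>Pow {..<N}. p s * (\<delta> s (restrict y s) - total N y)^2)"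

definition admissible :: "nat \<Rightarrow> (nat \<Rightarrow> real) \<Rightarrow> (nat \<Rightarrow> real) \<Rightarrow> real
    \<Rightarrow> (nat set \<Rightarrow> real) \<Rightarrow> (nat set \<Rightarrow> (nat \<Rightarrow> real) \<Rightarrow> real) \<Rightarrow> bool" where
  "admissible N a b n p \<delta> \<longleftrightarrow> is_design N p \<and> (\<forall>i<N. 0 < incl_prob N p i)
     \<and> exp_size N p \<le> n \<and> is_estimator N a b \<delta> \<and> unbiased N a b p \<delta>"

text \<open>Maximal risk over Theta, in the extended reals (it may be infinite).\<close>
definition max_risk :: "nat \<Rightarrow> (nat \<Rightarrow> real) \<Rightarrow> (nat \<Rightarrow> real)
    \<Rightarrow> (nat set \<Rightarrow> real) \<Rightarrow> (nat set \<Rightarrow> (nat \<Rightarrow> real) \<Rightarrow> real) \<Rightarrow> ereal" where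
  "max_risk N a b p \<delta> = (SUP y\<in>Theta N a b. ereal (risk N p \<delta> y))"

definition Vn :: "nat \<Rightarrow> (nat \<Rightarrow> real) \<Rightarrow> real \<Rightarrow> real" where
  "Vn N r n = Inf {(\<Sum>i<N. (r i)^2 * (1 - \<pi> i) / \<pi> i) | \<pi>.
                   (\<forall>i<N. 0 < \<pi> i \<and> \<pi> i \<le> 1) \<and> (\<Sum>i<N. \<pi> i) \<le> n}"

definition poisson_design :: "nat \<Rightarrow> (nat \<Rightarrow> real) \<Rightarrow> nat set \<Rightarrow> real" where
  "poisson_design N \<pi> s = (if s \<subseteq> {..<N}
      then (\<Prod>i\<in>s. \<pi> i) * (\<Prod>i\<in>{..<N} - s. 1 - \<pi> i) else 0)"

end

theory Submission
  imports Defs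
begin

text \<open>
  Upper bound: under Poisson sampling with inclusion probabilities pi_i, the difference estimator
  sum_i m_i + sum_{i in S} (y_i - m_i) / pi_i has risk sum_i (y_i - m_i)^2 (1 - pi_i) / pi_i,
  which is largest at a vertex of Theta.

  Lower bound: average the risk of an arbitrary unbiased pair (p, delta) over the 2^N vertices
  m + r e, e in {-1, 1}^N, of Theta. As delta_S only sees e on S, the Walsh coefficient of
  e |-> delta_S(y_S) along e_i vanishes unless i is in S, while unbiasedness makes its p-mean
  equal to r_i. Bessel's inequality and a Cauchy-Schwarz bound for a variable supported on the
  event i in S bound the average risk below by sum_i r_i^2 (1 - pi_i) / pi_i, where pi_i are the
  inclusion probabilities of p; under sum_i pi_i <= n this is at least V_n.

  That pi_i = min(1, c r_i) attains V_n is a Lagrange argument with multiplier 1 / c^2.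
\<close>

lemma sum_Pow_mult_sum_swap:
  fixes p :: "'a set \<Rightarrow> 'b::comm_semiring_0"
  assumes "finite A"
  shows "(\<Sum>s\<in>Pow A. p s * (\<Sum>i\<in>s. w i)) = (\<Sum>i\<in>A. w i * (\<Sum>s\<in>{s\<in>Pow A. i \<in> s}. p s))"
proof -
  have "(\<Sum>s\<in>Pow A. p s * (\<Sum>i\<in>s. w i)) = (\<Sum>s\<in>Pow A. \<Sum>i\<in>{i\<in>A. i \<in> s}. p s * w i)"
    by (intro sum.cong refl) (auto simp: sum_distrib_left Int_absorb1 Collect_conj_eq[symmetric] intro!: sum.cong)
  also have "\<dots> = (\<Sum>i\<in>A. \<Sum>s\<in>{s\<in>Pow A. i \<in> s}. p s * w i)"
    using assms by (intro sum.swap_restrict) auto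
  finally show ?thesis
    by (simp add: sum_distrib_left sum_distrib_right mult.commute)
qed

lemma exp_size_eq_sum_incl_prob: "exp_size N p = (\<Sum>i<N. incl_prob N p i)"
  using sum_Pow_mult_sum_swap[of "{..<N}" p "\<lambda>_. 1"]
  unfolding exp_size_def incl_prob_def by simp

lemma incl_prob_le_1:
  assumes "is_design N p"
  shows "incl_prob N p i \<le> 1"
proof -
  have "incl_prob N p i \<le> (\<Sum>s\<in>Pow {..<N}. p s)"
    unfolding incl_prob_def using assms by (intro sum_mono2) (auto simp: is_design_def)
  then show ?thesis using assms by (simp add: is_design_def)
qed

lemma sum_supersets_prod_complement:
  fixes q :: "'a \<Rightarrow> 'b::comm_ring_1"
  assumes "finite A" "B \<subseteq> A"
  shows "(\<Sum>s\<in>{s\<in>Pow A. B \<subseteq> s}. (\<Prod>i\<in>s. q i) * (\<Prod>i\<in>A - s. 1 - q i)) = (\<Prod>i\<in>B. q i)"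
proof -
  define g where "g i = (if i \<in> B then 0 else 1 - q i)" for i
  have "(\<Prod>i\<in>B. q i) = (\<Prod>i\<in>A. if i \<in> B then q i else 1)"
    using assms by (simp add: prod.If_cases Int_absorb1)
  also have "\<dots> = (\<Prod>i\<in>A. q i + g i)"
    by (intro prod.cong) (auto simp: g_def)
  also have "\<dots> = (\<Sum>s\<in>Pow A. (\<Prod>i\<in>s. q i) * (\<Prod>i\<in>A - s. g i))"
    using assms(1) by (rule prod_add)
  also have "\<dots> = (\<Sum>s\<in>Pow A. if B \<subseteq> s then (\<Prod>i\<in>s. q i) * (\<Prod>i\<in>A - s. 1 - q i) else 0)"
  proof (intro sum.cong refl)
    fix s assume "s \<in> Pow A"
    show "(\<Prod>i\<in>s. q i) * (\<Prod>i\<in>A - s. g i) = (if B \<subseteq> s then (\<Prod>i\<in>s. q i) * (\<Prod>i\<in>A - s. 1 - q i) else 0)"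
    proof (cases "B \<subseteq> s")
      case True
      then have "(\<Prod>i\<in>A - s. g i) = (\<Prod>i\<in>A - s. 1 - q i)"
        by (intro prod.cong) (auto simp: g_def)
      with True show ?thesis by simp
    next
      case False
      then have "(\<Prod>i\<in>A - s. g i) = 0"
        using assms by (intro prod_zero) (auto simp: g_def)
      with False show ?thesis by simp
    qed
  qed
  also have "\<dots> = (\<Sum>s\<in>{s\<in>Pow A. B \<subseteq> s}. (\<Prod>i\<in>s. q i) * (\<Prod>i\<in>A - s. 1 - q i))"
    using assms(1) by (subst sum.inter_filter) auto
  finally show ?thesis by (rule sym)
qed

definition difference_estimator ::
    "nat \<Rightarrow> (nat \<Rightarrow> real) \<Rightarrow> (nat \<Rightarrow> real) \<Rightarrow> nat set \<Rightarrow> (nat \<Rightarrow> real) \<Rightarrow> real" where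
  "difference_estimator N m \<pi> s z = (\<Sum>i<N. m i) + (\<Sum>i\<in>s. (z i - m i) / \<pi> i)"

lemma difference_estimator_eq:
  "difference_estimator N m \<pi> = (\<lambda>s z. (\<Sum>i<N. m i) + (\<Sum>i\<in>s. (z i - m i) / \<pi> i))"
  by (simp add: fun_eq_iff difference_estimator_def)

lemma is_estimator_difference_estimator: "is_estimator N a b (difference_estimator N m \<pi>)"
  unfolding is_estimator_def
proof (intro allI impI)
  fix s :: "nat set"
  have "(\<lambda>z. z i) \<in> borel_measurable (PiM s (\<lambda>i. restrict_space borel {a i..b i}))" if "i \<in> s" for i
    using measurable_component_singleton[OF that] measurable_restrict_space1[OF measurable_id]
    by (rule measurable_compose)
  then show "difference_estimator N m \<pi> s \<in> borel_measurable (PiM s (\<lambda>i. restrict_space borel {a i..b i}))"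
    unfolding difference_estimator_def by measurable
qed

locale poisson_sampling =
  fixes N :: nat and \<pi> :: "nat \<Rightarrow> real"
  assumes incl_pos: "\<And>i. i < N \<Longrightarrow> 0 < \<pi> i" and incl_le_1: "\<And>i. i < N \<Longrightarrow> \<pi> i \<le> 1"
begin

abbreviation p :: "nat set \<Rightarrow> real" where "p \<equiv> poisson_design N \<pi>"

lemma prob_superset:
  assumes "B \<subseteq> {..<N}"
  shows "(\<Sum>s\<in>{s\<in>Pow {..<N}. B \<subseteq> s}. p s) = (\<Prod>i\<in>B. \<pi> i)"
proof -
  have "(\<Sum>s\<in>{s\<in>Pow {..<N}. B \<subseteq> s}. p s)
      = (\<Sum>s\<in>{s\<in>Pow {..<N}. B \<subseteq> s}. (\<Prod>i\<in>s. \<pi> i) * (\<Prod>i\<in>{..<N} - s. 1 - \<pi> i))"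
    by (intro sum.cong refl) (auto simp: poisson_design_def)
  also have "\<dots> = (\<Prod>i\<in>B. \<pi> i)"
    using assms by (intro sum_supersets_prod_complement) auto
  finally show ?thesis .
qed

lemma sum_poisson_design: "(\<Sum>s\<in>Pow {..<N}. p s) = 1"
  using prob_superset[of "{}"] by (simp add: Pow_def)

lemma is_design: "is_design N p"
proof -
  have "0 \<le> p s" for s
    using incl_pos incl_le_1
    by (auto simp: poisson_design_def less_imp_le intro!: mult_nonneg_nonneg prod_nonneg)
  then show ?thesis
    using sum_poisson_design by (auto simp: is_design_def poisson_design_def)
qed

lemma incl_prob_poisson: "i < N \<Longrightarrow> incl_prob N p i = \<pi> i"
  using prob_superset[of "{i}"] by (simp add: incl_prob_def)

lemma exp_size_poisson: "exp_size N p = (\<Sum>i<N. \<pi> i)"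
  by (simp add: exp_size_eq_sum_incl_prob incl_prob_poisson)

lemma expectation_indicator_product:
  assumes "i < N" "j < N"
  shows "(\<Sum>s\<in>Pow {..<N}. p s * (of_bool (i \<in> s) * of_bool (j \<in> s)))
       = (if i = j then \<pi> i else \<pi> i * \<pi> j)"
proof -
  have "(\<Sum>s\<in>Pow {..<N}. p s * (of_bool (i \<in> s) * of_bool (j \<in> s)))
      = (\<Sum>s\<in>Pow {..<N}. if {i, j} \<subseteq> s then p s else 0)"
    by (intro sum.cong refl) auto
  also have "\<dots> = (\<Sum>s\<in>{s\<in>Pow {..<N}. {i, j} \<subseteq> s}. p s)"
    by (rule sum.inter_filter[symmetric]) simp
  also have "\<dots> = (\<Prod>k\<in>{i, j}. \<pi> k)"
    using assms by (intro prob_superset) auto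
  finally show ?thesis by simp
qed

lemma expectation_indicator: "i < N \<Longrightarrow> (\<Sum>s\<in>Pow {..<N}. p s * of_bool (i \<in> s)) = \<pi> i"
  using incl_prob_poisson[of i] by (simp add: incl_prob_def Int_def)

lemma expectation_centred_indicator:
  assumes "i < N"
  shows "(\<Sum>s\<in>Pow {..<N}. p s * (of_bool (i \<in> s) - \<pi> i)) = 0"
  using expectation_indicator[OF assms]
  by (simp only: right_diff_distrib sum_subtractf sum_distrib_right[symmetric] sum_poisson_design)

lemma covariance_centred_indicators:
  assumes "i < N" "j < N"
  shows "(\<Sum>s\<in>Pow {..<N}. p s * ((of_bool (i \<in> s) - \<pi> i) * (of_bool (j \<in> s) - \<pi> j)))
       = (if i = j then \<pi> i * (1 - \<pi> i) else 0)"
proof -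
  have "(\<Sum>s\<in>Pow {..<N}. p s * ((of_bool (i \<in> s) - \<pi> i) * (of_bool (j \<in> s) - \<pi> j)))
      = (\<Sum>s\<in>Pow {..<N}. p s * (of_bool (i \<in> s) * of_bool (j \<in> s)))
        - \<pi> j * (\<Sum>s\<in>Pow {..<N}. p s * of_bool (i \<in> s))
        - \<pi> i * (\<Sum>s\<in>Pow {..<N}. p s * of_bool (j \<in> s))
        + \<pi> i * \<pi> j * (\<Sum>s\<in>Pow {..<N}. p s)"
    unfolding sum_distrib_left sum_subtractf[symmetric] sum.distrib[symmetric]
    by (rule sum.cong) (simp_all add: algebra_simps)
  also have "\<dots> = (if i = j then \<pi> i else \<pi> i * \<pi> j) - \<pi> j * \<pi> i - \<pi> i * \<pi> j + \<pi> i * \<pi> j * 1"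
    using assms by (simp only: expectation_indicator_product expectation_indicator sum_poisson_design)
  finally show ?thesis
    by (cases "i = j") (simp_all add: algebra_simps)
qed

lemma difference_estimator_error:
  assumes "s \<subseteq> {..<N}"
  shows "difference_estimator N m \<pi> s (restrict y s) - total N y
       = (\<Sum>i<N. (y i - m i) / \<pi> i * (of_bool (i \<in> s) - \<pi> i))"
proof -
  have "(\<Sum>i<N. (y i - m i) / \<pi> i * of_bool (i \<in> s)) = (\<Sum>i\<in>s. (restrict y s i - m i) / \<pi> i)"
    using assms by (subst sum_mult_of_bool_eq) (auto simp: Int_absorb1)
  moreover have "(\<Sum>i<N. (y i - m i) / \<pi> i * \<pi> i) = (\<Sum>i<N. y i - m i)"
    using incl_pos by (intro sum.cong refl) (simp add: less_imp_neq[symmetric])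
  ultimately show ?thesis
    by (simp add: difference_estimator_def total_def right_diff_distrib sum_subtractf)
qed

lemma unbiased_difference_estimator: "unbiased N a b p (difference_estimator N m \<pi>)"
  unfolding unbiased_def
proof
  fix y
  have "(\<Sum>s\<in>Pow {..<N}. p s * difference_estimator N m \<pi> s (restrict y s)) - total N y
      = (\<Sum>s\<in>Pow {..<N}. p s * (difference_estimator N m \<pi> s (restrict y s) - total N y))"
    by (simp add: right_diff_distrib sum_subtractf sum_distrib_right[symmetric] sum_poisson_design)
  also have "\<dots> = (\<Sum>s\<in>Pow {..<N}. \<Sum>i<N. (y i - m i) / \<pi> i * (p s * (of_bool (i \<in> s) - \<pi> i)))"
    by (intro sum.cong refl) (simp add: difference_estimator_error sum_distrib_left mult_ac)
  also have "\<dots> = (\<Sum>i<N. (y i - m i) / \<pi> i * (\<Sum>s\<in>Pow {..<N}. p s * (of_bool (i \<in> s) - \<pi> i)))"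
    by (subst sum.swap) (simp add: sum_distrib_left)
  also have "\<dots> = 0"
    by (simp add: expectation_centred_indicator)
  finally show "(\<Sum>s\<in>Pow {..<N}. p s * difference_estimator N m \<pi> s (restrict y s)) = total N y"
    by simp
qed

lemma risk_difference_estimator:
  "risk N p (difference_estimator N m \<pi>) y = (\<Sum>i<N. (y i - m i)\<^sup>2 * (1 - \<pi> i) / \<pi> i)"
proof -
  define c where "c i = (y i - m i) / \<pi> i" for i
  define X where "X i s = of_bool (i \<in> s) - \<pi> i" for i s
  have "risk N p (difference_estimator N m \<pi>) y = (\<Sum>s\<in>Pow {..<N}. p s * (\<Sum>i<N. c i * X i s)\<^sup>2)"
    unfolding risk_def by (intro sum.cong refl) (simp add: difference_estimator_error c_def X_def)
  also have "\<dots> = (\<Sum>i<N. \<Sum>j<N. c i * c j * (\<Sum>s\<in>Pow {..<N}. p s * (X i s * X j s)))"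
    by (simp add: power2_eq_square sum_product sum_distrib_left sum.swap[of _ "Pow {..<N}"] algebra_simps)
  also have "\<dots> = (\<Sum>i<N. (c i)\<^sup>2 * (\<pi> i * (1 - \<pi> i)))"
    unfolding X_def
    by (intro sum.cong refl) (simp add: covariance_centred_indicators if_distrib sum.delta power2_eq_square cong: if_cong)
  also have "\<dots> = (\<Sum>i<N. (y i - m i)\<^sup>2 * (1 - \<pi> i) / \<pi> i)"
    using incl_pos by (intro sum.cong refl) (simp add: c_def power2_eq_square less_imp_neq[symmetric])
  finally show ?thesis .
qed

lemma admissible_difference_estimator:
  "(\<Sum>i<N. \<pi> i) \<le> n \<Longrightarrow> admissible N a b n p (difference_estimator N m \<pi>)"
  using is_design incl_prob_poisson incl_pos exp_size_poisson
    is_estimator_difference_estimator unbiased_difference_estimator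
  by (simp add: admissible_def)

end

definition sign_vectors :: "nat \<Rightarrow> (nat \<Rightarrow> real) set" where
  "sign_vectors N = PiE {..<N} (\<lambda>_. {-1, 1})"

definition walsh_coeff :: "nat \<Rightarrow> ((nat \<Rightarrow> real) \<Rightarrow> real) \<Rightarrow> nat \<Rightarrow> real" where
  "walsh_coeff N f i = (\<Sum>e\<in>sign_vectors N. f e * e i) / card (sign_vectors N)"

lemma finite_sign_vectors: "finite (sign_vectors N)"
  by (simp add: sign_vectors_def finite_PiE)

lemma card_sign_vectors_pos: "0 < card (sign_vectors N)"
  using finite_sign_vectors[of N] by (simp add: sign_vectors_def card_gt_0_iff PiE_eq_empty_iff)

lemma sign_vector_cases: "e \<in> sign_vectors N \<Longrightarrow> i < N \<Longrightarrow> e i = -1 \<or> e i = 1"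
  by (auto simp: sign_vectors_def PiE_iff)

lemma walsh_coeff_flip_invariant:
  assumes "i < N" and invariant: "\<And>e. e \<in> sign_vectors N \<Longrightarrow> f (e(i := - e i)) = f e"
  shows "walsh_coeff N f i = 0"
proof -
  have flip_closed: "e(i := - e i) \<in> sign_vectors N" if "e \<in> sign_vectors N" for e
    using that assms(1) by (auto simp: sign_vectors_def PiE_iff extensional_def)
  have "(\<Sum>e\<in>sign_vectors N. f e * e i) = (\<Sum>e\<in>sign_vectors N. f (e(i := - e i)) * - e i)"
    by (rule sum.reindex_bij_witness[of _ "\<lambda>e. e(i := - e i)" "\<lambda>e. e(i := - e i)"])
      (simp_all add: flip_closed)
  also have "\<dots> = - (\<Sum>e\<in>sign_vectors N. f e * e i)"
    by (simp add: invariant sum_negf[symmetric])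
  finally show ?thesis by (simp add: walsh_coeff_def)
qed

lemma sum_sign_vectors_mult:
  assumes "i < N" "j < N"
  shows "(\<Sum>e\<in>sign_vectors N. e i * e j) = (if i = j then card (sign_vectors N) else 0)"
proof (cases "i = j")
  case True
  have "e i * e j = 1" if "e \<in> sign_vectors N" for e
    using sign_vector_cases[OF that assms(1)] True by auto
  then have "(\<Sum>e\<in>sign_vectors N. e i * e j) = (\<Sum>e\<in>sign_vectors N. 1)"
    by (intro sum.cong) auto
  with True show ?thesis by simp
next
  case False
  have "walsh_coeff N (\<lambda>e. e j) i = 0"
    using False by (intro walsh_coeff_flip_invariant assms) auto
  with False show ?thesis
    using card_sign_vectors_pos[of N] by (simp add: walsh_coeff_def mult.commute)
qed

lemma walsh_coeff_affine:
  assumes "i < N"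
  shows "walsh_coeff N (\<lambda>e. d + (\<Sum>j<N. c j * e j)) i = c i"
proof -
  have "walsh_coeff N (\<lambda>_. 1) i = 0"
    using assms by (rule walsh_coeff_flip_invariant) simp
  then have "(\<Sum>e\<in>sign_vectors N. d * e i) = 0"
    using card_sign_vectors_pos[of N] by (simp add: walsh_coeff_def sum_distrib_left[symmetric])
  then have "(\<Sum>e\<in>sign_vectors N. (d + (\<Sum>j<N. c j * e j)) * e i)
      = (\<Sum>j<N. c j * (\<Sum>e\<in>sign_vectors N. e j * e i))"
    by (simp add: algebra_simps sum.distrib sum_distrib_left sum_distrib_right sum.swap[of _ "sign_vectors N"])
  also have "\<dots> = c i * card (sign_vectors N)"
    using assms by (simp add: sum_sign_vectors_mult if_distrib sum.delta cong: if_cong)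
  finally show ?thesis
    using card_sign_vectors_pos[of N] by (simp add: walsh_coeff_def)
qed

lemma walsh_coeff_diff: "walsh_coeff N (\<lambda>e. f e - g e) i = walsh_coeff N f i - walsh_coeff N g i"
  by (simp add: walsh_coeff_def left_diff_distrib sum_subtractf diff_divide_distrib)

lemma sum_sign_vectors_linear_square:
  fixes c :: "nat \<Rightarrow> real"
  shows "(\<Sum>e\<in>sign_vectors N. (\<Sum>i<N. c i * e i)\<^sup>2) = card (sign_vectors N) * (\<Sum>i<N. (c i)\<^sup>2)"
proof -
  have "(\<Sum>e\<in>sign_vectors N. (\<Sum>i<N. c i * e i)\<^sup>2)
      = (\<Sum>i<N. \<Sum>j<N. c i * c j * (\<Sum>e\<in>sign_vectors N. e i * e j))"
    by (simp add: power2_eq_square sum_product sum_distrib_left sum.swap[of _ "sign_vectors N"] algebra_simps)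
  also have "\<dots> = card (sign_vectors N) * (\<Sum>i<N. (c i)\<^sup>2)"
    by (simp add: sum_sign_vectors_mult if_distrib sum.delta power2_eq_square sum_distrib_left mult_ac
        cong: if_cong)
  finally show ?thesis .
qed

lemma walsh_coeff_bessel:
  "(\<Sum>i<N. (walsh_coeff N f i)\<^sup>2) \<le> (\<Sum>e\<in>sign_vectors N. (f e)\<^sup>2) / card (sign_vectors N)"
proof -
  define K where "K = real (card (sign_vectors N))"
  define c where "c = walsh_coeff N f"
  have K: "0 < K"
    using card_sign_vectors_pos by (simp add: K_def)
  have coeff: "(\<Sum>e\<in>sign_vectors N. f e * e i) = K * c i" for i
    using K by (simp add: c_def K_def walsh_coeff_def)
  have "(\<Sum>e\<in>sign_vectors N. f e * (\<Sum>i<N. c i * e i)) = (\<Sum>i<N. c i * (\<Sum>e\<in>sign_vectors N. f e * e i))"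
    by (simp add: sum_distrib_left sum.swap[of _ "sign_vectors N"] mult_ac)
  also have "\<dots> = K * (\<Sum>i<N. (c i)\<^sup>2)"
    by (simp only: coeff) (simp add: sum_distrib_left power2_eq_square mult_ac)
  finally have cross: "(\<Sum>e\<in>sign_vectors N. f e * (\<Sum>i<N. c i * e i)) = K * (\<Sum>i<N. (c i)\<^sup>2)" .
  have "0 \<le> (\<Sum>e\<in>sign_vectors N. (f e - (\<Sum>i<N. c i * e i))\<^sup>2)"
    by (intro sum_nonneg) simp
  also have "\<dots> = (\<Sum>e\<in>sign_vectors N. (f e)\<^sup>2) - K * (\<Sum>i<N. (c i)\<^sup>2)"
    by (simp add: power2_diff sum.distrib sum_subtractf sum_distrib_left[symmetric] mult.assoc cross
        sum_sign_vectors_linear_square K_def)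
  finally show ?thesis
    using K by (simp add: c_def K_def field_simps)
qed

lemma variance_ge_of_vanishing_off:
  fixes p h :: "'a \<Rightarrow> real"
  assumes "finite P" "Q \<subseteq> P" and p_nonneg: "\<And>s. s \<in> P \<Longrightarrow> 0 \<le> p s" and "(\<Sum>s\<in>P. p s) = 1"
    and vanish: "\<And>s. s \<in> P - Q \<Longrightarrow> h s = 0"
    and mean: "(\<Sum>s\<in>P. p s * h s) = \<mu>" and prob_pos: "0 < (\<Sum>s\<in>Q. p s)"
  shows "\<mu>\<^sup>2 * (1 - (\<Sum>s\<in>Q. p s)) / (\<Sum>s\<in>Q. p s) \<le> (\<Sum>s\<in>P. p s * (h s - \<mu>)\<^sup>2)"
proof -
  define q where "q = (\<Sum>s\<in>Q. p s)"
  define t where "t = \<mu> / q"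
  \<comment> \<open>Cauchy-Schwarz on Q: \<open>\<mu>\<^sup>2 = (\<Sum>s\<in>Q. p s * h s)\<^sup>2 \<le> q * (\<Sum>s\<in>Q. p s * (h s)\<^sup>2)\<close>\<close>
  have on_Q: "(\<Sum>s\<in>Q. p s * h s ^ k) = (\<Sum>s\<in>P. p s * h s ^ k)" if "0 < k" for k
    using assms(1,2) vanish that by (intro sum.mono_neutral_left) auto
  have "0 \<le> (\<Sum>s\<in>Q. p s * (h s - t)\<^sup>2)"
    using assms(2) p_nonneg by (intro sum_nonneg) auto
  also have "\<dots> = (\<Sum>s\<in>Q. p s * (h s)\<^sup>2) - 2 * t * (\<Sum>s\<in>Q. p s * h s) + t\<^sup>2 * q"
    by (simp add: q_def power2_diff algebra_simps sum.distrib sum_subtractf sum_distrib_left sum_distrib_right)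
  also have "\<dots> = (\<Sum>s\<in>P. p s * (h s)\<^sup>2) - \<mu>\<^sup>2 / q"
    using on_Q[of 1] on_Q[of 2] prob_pos mean
    by (simp add: t_def q_def power2_eq_square field_simps)
  finally have "\<mu>\<^sup>2 / q \<le> (\<Sum>s\<in>P. p s * (h s)\<^sup>2)" by simp
  moreover have "(\<Sum>s\<in>P. p s * (h s - \<mu>)\<^sup>2)
      = (\<Sum>s\<in>P. p s * (h s)\<^sup>2) - 2 * \<mu> * (\<Sum>s\<in>P. p s * h s) + \<mu>\<^sup>2 * (\<Sum>s\<in>P. p s)"
    by (simp add: power2_diff algebra_simps sum.distrib sum_subtractf sum_distrib_left sum_distrib_right)
  then have "(\<Sum>s\<in>P. p s * (h s - \<mu>)\<^sup>2) = (\<Sum>s\<in>P. p s * (h s)\<^sup>2) - \<mu>\<^sup>2"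
    using mean assms(4) by (simp add: power2_eq_square)
  moreover have "\<mu>\<^sup>2 * (1 - q) / q = \<mu>\<^sup>2 / q - \<mu>\<^sup>2"
    using prob_pos by (simp add: q_def field_simps)
  ultimately show ?thesis by (simp add: q_def)
qed

locale box =
  fixes N :: nat and a b m r :: "nat \<Rightarrow> real"
  assumes lower_eq: "\<And>i. a i = m i - r i" and upper_eq: "\<And>i. b i = m i + r i"
    and radius_nonneg: "\<And>i. i < N \<Longrightarrow> 0 \<le> r i"
begin

definition vertex :: "(nat \<Rightarrow> real) \<Rightarrow> nat \<Rightarrow> real" where
  "vertex e = restrict (\<lambda>i. m i + r i * e i) {..<N}"

lemma vertex_in_Theta: "e \<in> sign_vectors N \<Longrightarrow> vertex e \<in> Theta N a b"
  using sign_vector_cases radius_nonneg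
  by (fastforce simp: vertex_def Theta_def lower_eq upper_eq)

lemma walsh_coeff_total_vertex: "i < N \<Longrightarrow> walsh_coeff N (\<lambda>e. total N (vertex e)) i = r i"
  using walsh_coeff_affine[of i N "\<Sum>i<N. m i" r]
  by (simp add: total_def vertex_def sum.distrib)

lemma walsh_coeff_estimate_vanishes:
  assumes "i < N" "i \<notin> s"
  shows "walsh_coeff N (\<lambda>e. \<delta> s (restrict (vertex e) s)) i = 0"
proof (rule walsh_coeff_flip_invariant[OF assms(1)])
  fix e :: "nat \<Rightarrow> real"
  have "restrict (vertex (e(i := - e i))) s = restrict (vertex e) s"
    using assms(2) by (auto simp: vertex_def)
  then show "\<delta> s (restrict (vertex (e(i := - e i))) s) = \<delta> s (restrict (vertex e) s)"
    by simp
qed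

lemma unbiased_walsh_coeff_estimate:
  assumes "unbiased N a b p \<delta>" "i < N"
  shows "(\<Sum>s\<in>Pow {..<N}. p s * walsh_coeff N (\<lambda>e. \<delta> s (restrict (vertex e) s)) i) = r i"
proof -
  have "(\<Sum>s\<in>Pow {..<N}. p s * walsh_coeff N (\<lambda>e. \<delta> s (restrict (vertex e) s)) i)
      = walsh_coeff N (\<lambda>e. \<Sum>s\<in>Pow {..<N}. p s * \<delta> s (restrict (vertex e) s)) i"
    by (simp add: walsh_coeff_def sum_divide_distrib sum_distrib_left sum_distrib_right
        sum.swap[of _ "sign_vectors N"] mult.assoc)
  also have "\<dots> = walsh_coeff N (\<lambda>e. total N (vertex e)) i"
    using assms(1) vertex_in_Theta by (simp add: walsh_coeff_def unbiased_def)
  finally show ?thesis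
    using walsh_coeff_total_vertex[OF assms(2)] by simp
qed

lemma walsh_coeff_error_bound:
  "(\<Sum>i<N. (walsh_coeff N (\<lambda>e. \<delta> s (restrict (vertex e) s)) i - r i)\<^sup>2)
     \<le> (\<Sum>e\<in>sign_vectors N. (\<delta> s (restrict (vertex e) s) - total N (vertex e))\<^sup>2) / card (sign_vectors N)"
  using walsh_coeff_bessel[of N "\<lambda>e. \<delta> s (restrict (vertex e) s) - total N (vertex e)"]
  by (simp add: walsh_coeff_diff walsh_coeff_total_vertex)

lemma design_cost_le_mean_vertex_risk:
  assumes design: "is_design N p" and incl_pos: "\<And>i. i < N \<Longrightarrow> 0 < incl_prob N p i"
    and unbiased: "unbiased N a b p \<delta>"
  shows "(\<Sum>i<N. (r i)\<^sup>2 * (1 - incl_prob N p i) / incl_prob N p i)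
     \<le> (\<Sum>e\<in>sign_vectors N. risk N p \<delta> (vertex e)) / card (sign_vectors N)"
proof -
  define h where "h s i = walsh_coeff N (\<lambda>e. \<delta> s (restrict (vertex e) s)) i" for s i
  have p_nonneg: "0 \<le> p s" for s
    using design by (simp add: is_design_def)
  have "(r i)\<^sup>2 * (1 - incl_prob N p i) / incl_prob N p i \<le> (\<Sum>s\<in>Pow {..<N}. p s * (h s i - r i)\<^sup>2)"
    if "i < N" for i
    unfolding incl_prob_def
    by (rule variance_ge_of_vanishing_off)
      (use design incl_pos[OF that] that in \<open>auto simp: is_design_def incl_prob_def h_def
         walsh_coeff_estimate_vanishes unbiased_walsh_coeff_estimate[OF unbiased]\<close>)
  then have "(\<Sum>i<N. (r i)\<^sup>2 * (1 - incl_prob N p i) / incl_prob N p i)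
      \<le> (\<Sum>i<N. \<Sum>s\<in>Pow {..<N}. p s * (h s i - r i)\<^sup>2)"
    by (intro sum_mono) auto
  also have "\<dots> = (\<Sum>s\<in>Pow {..<N}. p s * (\<Sum>i<N. (h s i - r i)\<^sup>2))"
    by (simp add: sum_distrib_left sum.swap[of _ "Pow {..<N}"])
  also have "\<dots> \<le> (\<Sum>s\<in>Pow {..<N}. p s *
      ((\<Sum>e\<in>sign_vectors N. (\<delta> s (restrict (vertex e) s) - total N (vertex e))\<^sup>2) / card (sign_vectors N)))"
    unfolding h_def by (intro sum_mono mult_left_mono walsh_coeff_error_bound p_nonneg)
  also have "\<dots> = (\<Sum>e\<in>sign_vectors N. risk N p \<delta> (vertex e)) / card (sign_vectors N)"
    by (simp add: risk_def sum_divide_distrib sum_distrib_left sum.swap[of _ "sign_vectors N"])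
  finally show ?thesis .
qed

lemma design_cost_le_max_risk:
  assumes "is_design N p" "\<And>i. i < N \<Longrightarrow> 0 < incl_prob N p i" "unbiased N a b p \<delta>"
  shows "ereal (\<Sum>i<N. (r i)\<^sup>2 * (1 - incl_prob N p i) / incl_prob N p i) \<le> max_risk N a b p \<delta>"
proof -
  let ?mean = "(\<Sum>e\<in>sign_vectors N. risk N p \<delta> (vertex e)) / card (sign_vectors N)"
  have "\<exists>e\<in>sign_vectors N. ?mean \<le> risk N p \<delta> (vertex e)"
  proof (rule ccontr)
    assume "\<not> ?thesis"
    then have "(\<Sum>e\<in>sign_vectors N. risk N p \<delta> (vertex e)) < card (sign_vectors N) * ?mean"
      using card_sign_vectors_pos by (intro sum_bounded_above_strict) (auto simp: not_le)
    then show False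
      using card_sign_vectors_pos[of N] by simp
  qed
  then obtain e where e: "e \<in> sign_vectors N" "?mean \<le> risk N p \<delta> (vertex e)" ..
  have "ereal (\<Sum>i<N. (r i)\<^sup>2 * (1 - incl_prob N p i) / incl_prob N p i) \<le> ereal (risk N p \<delta> (vertex e))"
    using design_cost_le_mean_vertex_risk[OF assms] e(2) by simp
  also have "\<dots> \<le> max_risk N a b p \<delta>"
    unfolding max_risk_def using vertex_in_Theta[OF e(1)] by (rule SUP_upper)
  finally show ?thesis .
qed

lemma max_risk_difference_estimator:
  assumes "poisson_sampling N \<pi>"
  shows "max_risk N a b (poisson_design N \<pi>) (difference_estimator N m \<pi>)
       = ereal (\<Sum>i<N. (r i)\<^sup>2 * (1 - \<pi> i) / \<pi> i)"
proof -
  interpret poisson_sampling N \<pi> by fact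
  have "(y i - m i)\<^sup>2 * (1 - \<pi> i) / \<pi> i \<le> (r i)\<^sup>2 * (1 - \<pi> i) / \<pi> i"
    if "y \<in> Theta N a b" "i < N" for y i
  proof -
    have "\<bar>y i - m i\<bar> \<le> r i"
      using that by (force simp: Theta_def PiE_iff lower_eq upper_eq abs_le_iff)
    then have "(y i - m i)\<^sup>2 \<le> (r i)\<^sup>2"
      by (metis abs_le_square_iff abs_of_nonneg radius_nonneg that(2))
    then show ?thesis
      using incl_pos[OF that(2)] incl_le_1[OF that(2)] by (intro divide_right_mono mult_right_mono) auto
  qed
  then have "max_risk N a b p (difference_estimator N m \<pi>) \<le> ereal (\<Sum>i<N. (r i)\<^sup>2 * (1 - \<pi> i) / \<pi> i)"
    unfolding max_risk_def risk_difference_estimator by (auto intro!: SUP_least sum_mono)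
  moreover have "restrict b {..<N} \<in> Theta N a b"
    using radius_nonneg by (auto simp: Theta_def lower_eq upper_eq)
  then have "ereal (\<Sum>i<N. (r i)\<^sup>2 * (1 - \<pi> i) / \<pi> i) \<le> max_risk N a b p (difference_estimator N m \<pi>)"
    unfolding max_risk_def risk_difference_estimator
    by (rule SUP_upper2) (simp add: upper_eq)
  ultimately show ?thesis by (rule antisym)
qed

end

text \<open>\<open>q\<^sub>0\<close> minimises \<open>q \<mapsto> r\<^sup>2 * (1 - q) / q + q / c\<^sup>2\<close> on \<open>{0<..1}\<close>: the Lagrangian of the
  constraint \<open>\<Sum>i<N. \<pi> i \<le> n\<close> with multiplier \<open>1 / c\<^sup>2\<close>.\<close>

lemma design_cost_ge_tangent:
  fixes r c q :: real
  assumes r: "0 < r" and c: "0 < c" and q: "0 < q" "q \<le> 1"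
  defines "q\<^sub>0 \<equiv> min 1 (c * r)"
  shows "r\<^sup>2 * (1 - q\<^sub>0) / q\<^sub>0 - (q - q\<^sub>0) / c\<^sup>2 \<le> r\<^sup>2 * (1 - q) / q"
proof (cases "c * r \<le> 1")
  case True
  then have "q\<^sub>0 = c * r" by (simp add: q\<^sub>0_def)
  have "0 \<le> (r * c - q)\<^sup>2 / (q * c\<^sup>2)"
    using q c by simp
  also have "\<dots> = r\<^sup>2 * (1 - q) / q - (r\<^sup>2 * (1 - c * r) / (c * r) - (q - c * r) / c\<^sup>2)"
    using q c r by (simp add: field_simps power2_eq_square)
  finally show ?thesis
    using \<open>q\<^sub>0 = c * r\<close> by simp
next
  case False
  then have "q\<^sub>0 = 1" by (simp add: q\<^sub>0_def)
  have "1 / c \<le> r"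
    using False c by (simp add: field_simps)
  then have "1 / c\<^sup>2 \<le> r\<^sup>2"
    using power_mono[of "1 / c" r 2] c by (simp add: power_divide)
  have "r\<^sup>2 * (1 - q\<^sub>0) / q\<^sub>0 - (q - q\<^sub>0) / c\<^sup>2 = (1 - q) / c\<^sup>2"
    using \<open>q\<^sub>0 = 1\<close> c by (simp add: field_simps)
  also have "\<dots> \<le> (1 - q) * r\<^sup>2"
    using mult_left_mono[OF \<open>1 / c\<^sup>2 \<le> r\<^sup>2\<close>, of "1 - q"] q by simp
  also have "\<dots> \<le> r\<^sup>2 * (1 - q) / q"
    using q mult_left_mono[of 1 "1 / q" "(1 - q) * r\<^sup>2"] by (simp add: mult.commute)
  finally show ?thesis .
qed

lemma design_cost_min:
  fixes r \<pi> :: "nat \<Rightarrow> real"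
  assumes r: "\<And>i. i < N \<Longrightarrow> 0 < r i" and c: "0 < c" and c_sum: "(\<Sum>i<N. min 1 (c * r i)) = n"
    and \<pi>: "\<And>i. i < N \<Longrightarrow> 0 < \<pi> i \<and> \<pi> i \<le> 1" and \<pi>_sum: "(\<Sum>i<N. \<pi> i) \<le> n"
  shows "(\<Sum>i<N. (r i)\<^sup>2 * (1 - min 1 (c * r i)) / min 1 (c * r i)) \<le> (\<Sum>i<N. (r i)\<^sup>2 * (1 - \<pi> i) / \<pi> i)"
proof -
  have "(\<Sum>i<N. (r i)\<^sup>2 * (1 - min 1 (c * r i)) / min 1 (c * r i)) - ((\<Sum>i<N. \<pi> i) - n) / c\<^sup>2
      = (\<Sum>i<N. (r i)\<^sup>2 * (1 - min 1 (c * r i)) / min 1 (c * r i) - (\<pi> i - min 1 (c * r i)) / c\<^sup>2)"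
    using c_sum by (simp add: sum_subtractf sum_divide_distrib[symmetric])
  also have "\<dots> \<le> (\<Sum>i<N. (r i)\<^sup>2 * (1 - \<pi> i) / \<pi> i)"
    using r c \<pi> by (intro sum_mono design_cost_ge_tangent) auto
  moreover have "((\<Sum>i<N. \<pi> i) - n) / c\<^sup>2 \<le> 0"
    using \<pi>_sum by (simp add: divide_le_0_iff)
  ultimately show ?thesis
    by linarith
qed

lemma Vn_eq_min_design_cost:
  fixes r :: "nat \<Rightarrow> real"
  assumes r: "\<And>i. i < N \<Longrightarrow> 0 < r i" and c: "0 < c" and c_sum: "(\<Sum>i<N. min 1 (c * r i)) = n"
  shows "Vn N r n = (\<Sum>i<N. (r i)\<^sup>2 * (1 - min 1 (c * r i)) / min 1 (c * r i))"
  unfolding Vn_def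
proof (rule cInf_eq_minimum)
  show "(\<Sum>i<N. (r i)\<^sup>2 * (1 - min 1 (c * r i)) / min 1 (c * r i))
      \<in> {\<Sum>i<N. (r i)\<^sup>2 * (1 - \<pi> i) / \<pi> i |\<pi>. (\<forall>i<N. 0 < \<pi> i \<and> \<pi> i \<le> 1) \<and> (\<Sum>i<N. \<pi> i) \<le> n}"
    using r c c_sum by (auto intro!: exI[of _ "\<lambda>i. min 1 (c * r i)"])
next
  fix x
  assume "x \<in> {\<Sum>i<N. (r i)\<^sup>2 * (1 - \<pi> i) / \<pi> i |\<pi>. (\<forall>i<N. 0 < \<pi> i \<and> \<pi> i \<le> 1) \<and> (\<Sum>i<N. \<pi> i) \<le> n}"
  then show "(\<Sum>i<N. (r i)\<^sup>2 * (1 - min 1 (c * r i)) / min 1 (c * r i)) \<le> x"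
    using design_cost_min[OF r c c_sum] by auto
qed

lemma Vn_le_design_cost:
  fixes r \<pi> :: "nat \<Rightarrow> real"
  assumes "\<And>i. i < N \<Longrightarrow> 0 < \<pi> i \<and> \<pi> i \<le> 1" "(\<Sum>i<N. \<pi> i) \<le> n"
  shows "Vn N r n \<le> (\<Sum>i<N. (r i)\<^sup>2 * (1 - \<pi> i) / \<pi> i)"
  unfolding Vn_def
proof (rule cInf_lower)
  show "(\<Sum>i<N. (r i)\<^sup>2 * (1 - \<pi> i) / \<pi> i)
      \<in> {\<Sum>i<N. (r i)\<^sup>2 * (1 - \<pi> i) / \<pi> i |\<pi>. (\<forall>i<N. 0 < \<pi> i \<and> \<pi> i \<le> 1) \<and> (\<Sum>i<N. \<pi> i) \<le> n}"
    using assms by blast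
  have "0 \<le> (\<Sum>i<N. (r i)\<^sup>2 * (1 - \<pi> i) / \<pi> i)" if "\<forall>i<N. 0 < \<pi> i \<and> \<pi> i \<le> 1" for \<pi> :: "nat \<Rightarrow> real"
    using that by (intro sum_nonneg divide_nonneg_pos mult_nonneg_nonneg) auto
  then show "bdd_below {\<Sum>i<N. (r i)\<^sup>2 * (1 - \<pi> i) / \<pi> i |\<pi>. (\<forall>i<N. 0 < \<pi> i \<and> \<pi> i \<le> 1) \<and> (\<Sum>i<N. \<pi> i) \<le> n}"
    by (intro bdd_belowI[of _ 0]) auto
qed

lemma exists_scale_sum_min_eq:
  fixes r :: "nat \<Rightarrow> real" and n :: real
  assumes r: "\<And>i. i < N \<Longrightarrow> 0 < r i" and n: "0 < n" "n < N"
  shows "\<exists>c>0. (\<Sum>i<N. min 1 (c * r i)) = n"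
proof -
  define F where "F c = (\<Sum>i<N. min 1 (c * r i))" for c
  define C where "C = (\<Sum>i<N. 1 / r i)"
  have "1 \<le> C * r i" if "i < N" for i
  proof -
    have "1 / r i \<le> C"
      unfolding C_def using r that by (intro member_le_sum) (simp_all add: less_imp_le[OF r])
    then show ?thesis
      using r[OF that] by (simp add: field_simps)
  qed
  then have "F C = N"
    by (simp add: F_def min_def)
  moreover have "0 \<le> C"
    unfolding C_def by (intro sum_nonneg) (simp add: less_imp_le[OF r])
  moreover have "F 0 = 0"
    by (simp add: F_def)
  moreover have "\<forall>x. 0 \<le> x \<and> x \<le> C \<longrightarrow> isCont F x"
    unfolding F_def by (auto intro!: continuous_intros)
  ultimately obtain c where "0 \<le> c" "F c = n"
    using IVT[of F 0 n C] n by auto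
  moreover have "c \<noteq> 0"
    using \<open>F c = n\<close> \<open>F 0 = 0\<close> n by auto
  ultimately show ?thesis
    by (intro exI[of _ c]) (auto simp: F_def)
qed

context box
begin

lemma Vn_le_max_risk:
  assumes "admissible N a b n p \<delta>"
  shows "ereal (Vn N r n) \<le> max_risk N a b p \<delta>"
proof -
  have design: "is_design N p" and incl_pos: "\<And>i. i < N \<Longrightarrow> 0 < incl_prob N p i"
    and "exp_size N p \<le> n" and "unbiased N a b p \<delta>"
    using assms by (auto simp: admissible_def)
  then have "Vn N r n \<le> (\<Sum>i<N. (r i)\<^sup>2 * (1 - incl_prob N p i) / incl_prob N p i)"
    by (intro Vn_le_design_cost) (auto simp: incl_prob_le_1 exp_size_eq_sum_incl_prob)
  then have "ereal (Vn N r n) \<le> ereal (\<Sum>i<N. (r i)\<^sup>2 * (1 - incl_prob N p i) / incl_prob N p i)"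
    by simp
  also have "\<dots> \<le> max_risk N a b p \<delta>"
    using design incl_pos \<open>unbiased N a b p \<delta>\<close> by (rule design_cost_le_max_risk)
  finally show ?thesis .
qed

lemma optimal_poisson_difference_estimator:
  assumes "\<forall>i<N. 0 < r i" and c: "0 < c" and c_sum: "(\<Sum>i<N. min 1 (c * r i)) = n"
  defines "\<pi> \<equiv> \<lambda>i. min 1 (c * r i)"
  shows "admissible N a b n (poisson_design N \<pi>) (difference_estimator N m \<pi>)"
    and "\<And>i. i < N \<Longrightarrow> incl_prob N (poisson_design N \<pi>) i = \<pi> i"
    and "(\<Sum>i<N. (r i)\<^sup>2 * (1 - \<pi> i) / \<pi> i) = Vn N r n"
    and "max_risk N a b (poisson_design N \<pi>) (difference_estimator N m \<pi>) = ereal (Vn N r n)"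
proof -
  have r_pos: "\<And>i. i < N \<Longrightarrow> 0 < r i"
    using assms(1) by simp
  interpret poisson_sampling N \<pi>
    using c r_pos by unfold_locales (auto simp: \<pi>_def)
  show "admissible N a b n (poisson_design N \<pi>) (difference_estimator N m \<pi>)"
    using c_sum by (intro admissible_difference_estimator) (simp add: \<pi>_def)
  show "\<And>i. i < N \<Longrightarrow> incl_prob N (poisson_design N \<pi>) i = \<pi> i"
    by (rule incl_prob_poisson)
  show cost: "(\<Sum>i<N. (r i)\<^sup>2 * (1 - \<pi> i) / \<pi> i) = Vn N r n"
    unfolding \<pi>_def using Vn_eq_min_design_cost[OF r_pos c c_sum] by simp
  show "max_risk N a b (poisson_design N \<pi>) (difference_estimator N m \<pi>) = ereal (Vn N r n)"
    using max_risk_difference_estimator[OF poisson_sampling_axioms] cost by simp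
qed

end

theorem theorem3:
  fixes N :: nat and a b :: "nat \<Rightarrow> real" and n :: real
  defines "r \<equiv> (\<lambda>i. (b i - a i) / 2)"
      and "m \<equiv> (\<lambda>i. (a i + b i) / 2)"
  assumes "N \<ge> 1"
      and "\<forall>i<N. a i \<le> b i"
      and "\<forall>i<N. r i > 0"
      and "0 < n" and "n < real N"
  shows "(INF pd\<in>{(p, \<delta>). admissible N a b n p \<delta>}. max_risk N a b (fst pd) (snd pd))
           = ereal (Vn N r n)
         \<and> (\<exists>c>0. (\<Sum>i<N. min 1 (c * r i)) = n)
         \<and> (\<forall>c>0. (\<Sum>i<N. min 1 (c * r i)) = n \<longrightarrow>
           (let \<pi> = (\<lambda>i. min 1 (c * r i));
                p = poisson_design N \<pi>;
                \<delta> = (\<lambda>s z. (\<Sum>i<N. m i) + (\<Sum>i\<in>s. (z i - m i) / \<pi> i))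
            in admissible N a b n p \<delta>
               \<and> (\<forall>i<N. incl_prob N p i = \<pi> i)
               \<and> (\<Sum>i<N. (r i)^2 * (1 - \<pi> i) / \<pi> i) = Vn N r n
               \<and> max_risk N a b p \<delta> = ereal (Vn N r n)))"
proof -
  have r_pos: "\<And>i. i < N \<Longrightarrow> 0 < r i"
    using assms(5) by simp
  interpret box N a b m r
    using r_pos by unfold_locales (auto simp: r_def m_def less_imp_le field_simps)
  obtain c where c: "0 < c" "(\<Sum>i<N. min 1 (c * r i)) = n"
    using exists_scale_sum_min_eq[of N r n] r_pos assms(6,7) by blast
  note optimal = optimal_poisson_difference_estimator[OF assms(5), unfolded difference_estimator_eq]
  have "(INF pd\<in>{(p, \<delta>). admissible N a b n p \<delta>}. max_risk N a b (fst pd) (snd pd)) = ereal (Vn N r n)"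
  proof (rule antisym)
    show "(INF pd\<in>{(p, \<delta>). admissible N a b n p \<delta>}. max_risk N a b (fst pd) (snd pd)) \<le> ereal (Vn N r n)"
      using optimal(1,4)[OF c] by (intro INF_lower2) auto
    show "ereal (Vn N r n) \<le> (INF pd\<in>{(p, \<delta>). admissible N a b n p \<delta>}. max_risk N a b (fst pd) (snd pd))"
      by (intro INF_greatest) (auto intro: Vn_le_max_risk)
  qed
  with c show ?thesis
    unfolding Let_def using optimal by (intro conjI allI impI) auto
qed

end
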